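(* Let $n\ge2$ and let $T=(n;\sigma,\delta,-\sigma)$ with $\sigma,\delta\in\mathbb{R}$, $\sigma\ne0$ (a real shifted skew-symmetric tridiagonal Toeplitz matrix). Then every eigenvalue $\lambda_h$ of $T$ has $\mathcal A_{\mathcal T}$-structured condition number $\kappa_{\mathcal A_{\mathcal T}}(\lambda_h)=\frac1{\sqrt n}$, $h=1,\dots,n$.
   Context: $(n;\sigma,\delta,\tau)$ is the $n\times n$ tridiagonal Toeplitz matrix with diagonal $\delta$, superdiagonal $\tau$, subdiagonal $\sigma$. For $\sigma\tau\ne0$ the eigenvalue $\lambda_h=\delta+2\sqrt{\sigma\tau}\cos\frac{h\pi}{n+1}$ has right eigenvector $x_h$ with $x_{h,k}=(\sqrt{\sigma/\tau})^k\sin\frac{hk\pi}{n+1}$ and left eigenvector $y_h$ ($y_h^HT=\lambda_hy_h^H$) with $y_{h,k}=(\sqrt{\bar\tau/\bar\sigma})^k\sin\frac{hk\pi}{n+1}$; let $\widetilde x_h,\widetilde y_h$ be their normalizations, $\kappa(\lambda_h)=\|x_h\|_2\|y_h\|_2/|y_h^Hx_h|$ (here equal to $1$), and $W_h=\widetilde y_h\widetilde x_h^H$. $\mathcal A_{\mathcal T}$ denotes the real subspace of real matrices $(n;s,d,-s)$, $s,d\in\mathbb{R}$; $W_h|_{\mathcal A_{\mathcal T}}$ is the orthogonal projection of $W_h$ onto $\mathcal A_{\mathcal T}$ with respect to the real Frobenius inner product $\mathrm{Re}\,\mathrm{tr}(A^HB)$, and $\kappa_{\mathcal A_{\mathcal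 T}}(\lambda_h)=\kappa(\lambda_h)\|W_h|_{\mathcal A_{\mathcal T}}\|_F$. *)

theory Defs
  imports Complex_Main
begin

text \<open>n-by-n matrices are represented as functions nat => nat => complex, indexed by
  {1..n} x {1..n} (entries outside this range are zero); vectors as nat => complex
  indexed by {1..n}.\<close>

definition tridiag_toeplitz :: "nat \<Rightarrow> complex \<Rightarrow> complex \<Rightarrow> complex \<Rightarrow> nat \<Rightarrow> nat \<Rightarrow> complex" where
  "tridiag_toeplitz n \<sigma> \<delta> \<tau> = (\<lambda>i j.
     if i \<in> {1..n} \<and> j \<in> {1..n} then
       (if i = j then \<delta> else if i = j + 1 then \<sigma> else if j = i + 1 then \<tau> else 0)
     else 0)"

definition tt_eigval :: "nat \<Rightarrow> complex \<Rightarrow> complex \<Rightarrow> complex \<Rightarrow> nat \<Rightarrow> complex" where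
  "tt_eigval n \<sigma> \<delta> \<tau> h = \<delta> + 2 * csqrt (\<sigma> * \<tau>) * complex_of_real (cos (real h * pi / real (n + 1)))"

definition tt_rvec :: "nat \<Rightarrow> complex \<Rightarrow> complex \<Rightarrow> nat \<Rightarrow> nat \<Rightarrow> complex" where
  "tt_rvec n \<sigma> \<tau> h k = (csqrt (\<sigma> / \<tau>)) ^ k * complex_of_real (sin (real h * real k * pi / real (n + 1)))"

definition tt_lvec :: "nat \<Rightarrow> complex \<Rightarrow> complex \<Rightarrow> nat \<Rightarrow> nat \<Rightarrow> complex" where
  "tt_lvec n \<sigma> \<tau> h k = (csqrt (cnj \<tau> / cnj \<sigma>)) ^ k * complex_of_real (sin (real h * real k * pi / real (n + 1)))"

definition vnorm2 :: "nat \<Rightarrow> (nat \<Rightarrow> complex) \<Rightarrow> real" where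
  "vnorm2 n x = sqrt (\<Sum>k\<in>{1..n}. (cmod (x k))\<^sup>2)"

definition vinner :: "nat \<Rightarrow> (nat \<Rightarrow> complex) \<Rightarrow> (nat \<Rightarrow> complex) \<Rightarrow> complex" where
  "vinner n u v = (\<Sum>k\<in>{1..n}. cnj (u k) * v k)"

definition vnormalize :: "nat \<Rightarrow> (nat \<Rightarrow> complex) \<Rightarrow> nat \<Rightarrow> complex" where
  "vnormalize n x = (\<lambda>k. x k / complex_of_real (vnorm2 n x))"

definition tt_kappa :: "nat \<Rightarrow> complex \<Rightarrow> complex \<Rightarrow> complex \<Rightarrow> nat \<Rightarrow> real" where
  "tt_kappa n \<sigma> \<delta> \<tau> h =
     vnorm2 n (tt_rvec n \<sigma> \<tau> h) * vnorm2 n (tt_lvec n \<sigma> \<tau> h)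
       / cmod (vinner n (tt_lvec n \<sigma> \<tau> h) (tt_rvec n \<sigma> \<tau> h))"

definition tt_W :: "nat \<Rightarrow> complex \<Rightarrow> complex \<Rightarrow> nat \<Rightarrow> nat \<Rightarrow> nat \<Rightarrow> complex" where
  "tt_W n \<sigma> \<tau> h = (\<lambda>i j.
     if i \<in> {1..n} \<and> j \<in> {1..n} then
       vnormalize n (tt_lvec n \<sigma> \<tau> h) i * cnj (vnormalize n (tt_rvec n \<sigma> \<tau> h) j)
     else 0)"

definition frob_inner :: "nat \<Rightarrow> (nat \<Rightarrow> nat \<Rightarrow> complex) \<Rightarrow> (nat \<Rightarrow> nat \<Rightarrow> complex) \<Rightarrow> real" where
  "frob_inner n A B = Re (\<Sum>i\<in>{1..n}. \<Sum>j\<in>{1..n}. cnj (A i j) * B i j)"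

definition frob_norm :: "nat \<Rightarrow> (nat \<Rightarrow> nat \<Rightarrow> complex) \<Rightarrow> real" where
  "frob_norm n A = sqrt (\<Sum>i\<in>{1..n}. \<Sum>j\<in>{1..n}. (cmod (A i j))\<^sup>2)"

definition A_T :: "nat \<Rightarrow> (nat \<Rightarrow> nat \<Rightarrow> complex) set" where
  "A_T n = {M. \<exists>s d :: real. M = tridiag_toeplitz n (of_real s) (of_real d) (- of_real s)}"

definition proj_A_T :: "nat \<Rightarrow> (nat \<Rightarrow> nat \<Rightarrow> complex) \<Rightarrow> nat \<Rightarrow> nat \<Rightarrow> complex" where
  "proj_A_T n W = (THE P. P \<in> A_T n \<and> (\<forall>A \<in> A_T n. frob_inner n A (\<lambda>i j. W i j - P i j) = 0))"

text \<open>(The matrix T = (n; sigma, delta, tau) has eigenvalue tt_eigval n sigma delta tau h with these eigenvectors; the condition numbers do not depend on delta.) Structured condition number kappa_{A_T}(lambda_h).\<close>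
definition tt_kappa_AT :: "nat \<Rightarrow> complex \<Rightarrow> complex \<Rightarrow> complex \<Rightarrow> nat \<Rightarrow> real" where
  "tt_kappa_AT n \<sigma> \<delta> \<tau> h = tt_kappa n \<sigma> \<delta> \<tau> h * frob_norm n (proj_A_T n (tt_W n \<sigma> \<tau> h))"

end

theory Submission
  imports Defs
begin

text \<open>For real \<open>\<tau> = -\<sigma>\<close> the left and right eigenvectors coincide, so \<open>\<kappa>(\<lambda>\<^sub>h) = 1\<close> and
  \<open>W\<^sub>h\<close> is the Hermitian matrix \<open>x x\<^sup>H / \<parallel>x\<parallel>\<^sup>2\<close> of trace 1. Pairing with \<open>(n; s, d, -s)\<close> reads off
  \<open>d Re tr M + s \<Sum>\<^sub>i Re (M(i+1,i) - M(i,i+1))\<close>, and the second functional vanishes on Hermitian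
  matrices. Since the Gram matrix of the basis \<open>I, (n; 1, 0, -1)\<close> of \<open>\<A>\<^sub>T\<close> is
  \<open>diag(n, 2(n-1))\<close>, the projection of \<open>W\<^sub>h\<close> is \<open>I/n\<close>, of Frobenius norm \<open>1/\<surd>n\<close>.\<close>

abbreviation shifted_skew_tt :: "nat \<Rightarrow> real \<Rightarrow> real \<Rightarrow> nat \<Rightarrow> nat \<Rightarrow> complex" where
  "shifted_skew_tt n s d \<equiv> tridiag_toeplitz n (of_real s) (of_real d) (- of_real s)"

definition re_trace :: "nat \<Rightarrow> (nat \<Rightarrow> nat \<Rightarrow> complex) \<Rightarrow> real" where
  "re_trace n M = (\<Sum>i\<in>{1..n}. Re (M i i))"

definition re_skew_trace :: "nat \<Rightarrow> (nat \<Rightarrow> nat \<Rightarrow> complex) \<Rightarrow> real" where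
  "re_skew_trace n M = (\<Sum>i\<in>{1..<n}. Re (M (Suc i) i) - Re (M i (Suc i)))"

lemma re_trace_diff [simp]: "re_trace n (\<lambda>i j. A i j - B i j) = re_trace n A - re_trace n B"
  by (simp add: re_trace_def sum_subtractf)

lemma re_skew_trace_diff [simp]:
  "re_skew_trace n (\<lambda>i j. A i j - B i j) = re_skew_trace n A - re_skew_trace n B"
  by (simp add: re_skew_trace_def sum_subtractf)

lemma re_trace_shifted_skew_tt [simp]: "re_trace n (shifted_skew_tt n s d) = real n * d"
  by (simp add: re_trace_def tridiag_toeplitz_def)

lemma re_skew_trace_shifted_skew_tt [simp]:
  "re_skew_trace n (shifted_skew_tt n s d) = 2 * real (n - 1) * s"
  by (simp add: re_skew_trace_def tridiag_toeplitz_def)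

lemma frob_inner_shifted_skew_tt:
  "frob_inner n (shifted_skew_tt n s d) M = d * re_trace n M + s * re_skew_trace n M"
proof -
  let ?I = "{1..n}"
  have entry: "cnj (shifted_skew_tt n s d i j) * M i j =
      (if j = i then of_real d * M i j else 0) + (if i = Suc j then of_real s * M i j else 0)
      - (if j = Suc i then of_real s * M i j else 0)" if "i \<in> ?I" "j \<in> ?I" for i j
    using that by (auto simp: tridiag_toeplitz_def)
  have subdiag: "(\<Sum>i\<in>?I. \<Sum>j\<in>?I. if i = Suc j then of_real s * M i j else 0)
      = (\<Sum>j\<in>{1..<n}. of_real s * M (Suc j) j)"
    by (subst sum.swap) (auto simp: sum.delta' intro!: sum.mono_neutral_cong_right)
  have superdiag: "(\<Sum>i\<in>?I. \<Sum>j\<in>?I. if j = Suc i then of_real s * M i j else 0)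
      = (\<Sum>i\<in>{1..<n}. of_real s * M i (Suc i))"
    by (auto simp: sum.delta' intro!: sum.mono_neutral_cong_right)
  have "frob_inner n (shifted_skew_tt n s d) M
      = Re (\<Sum>i\<in>?I. \<Sum>j\<in>?I. (if j = i then of_real d * M i j else 0)
          + (if i = Suc j then of_real s * M i j else 0) - (if j = Suc i then of_real s * M i j else 0))"
    unfolding frob_inner_def by (intro arg_cong[where f = Re] sum.cong refl) (simp add: entry)
  also have "\<dots> = Re (of_real d * (\<Sum>i\<in>?I. M i i) + (\<Sum>j\<in>{1..<n}. of_real s * M (Suc j) j)
        - (\<Sum>i\<in>{1..<n}. of_real s * M i (Suc i)))"
    by (simp only: sum.distrib sum_subtractf subdiag superdiag) (simp add: sum_distrib_left)
  also have "\<dots> = d * re_trace n M + s * re_skew_trace n M"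
    by (simp add: re_trace_def re_skew_trace_def sum_subtractf sum_distrib_left right_diff_distrib)
  finally show ?thesis .
qed

lemma frob_norm_eq_sqrt_frob_inner: "frob_norm n A = sqrt (frob_inner n A A)"
proof -
  have "cnj z * z = of_real ((cmod z)\<^sup>2)" for z
    by (metis complex_norm_square mult.commute)
  then show ?thesis
    by (simp add: frob_norm_def frob_inner_def flip: of_real_sum)
qed

lemma frob_norm_shifted_skew_tt:
  "frob_norm n (shifted_skew_tt n s d) = sqrt (real n * d\<^sup>2 + 2 * real (n - 1) * s\<^sup>2)"
  by (simp add: frob_norm_eq_sqrt_frob_inner frob_inner_shifted_skew_tt power2_eq_square algebra_simps)

lemma proj_A_T_eq:
  assumes "n \<ge> 2"
  shows "proj_A_T n W
    = shifted_skew_tt n (re_skew_trace n W / (2 * real (n - 1))) (re_trace n W / real n)"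
    (is "_ = ?P")
  unfolding proj_A_T_def
proof (rule the_equality)
  have n: "real n \<noteq> 0" "real (n - 1) \<noteq> 0" using assms by auto
  have "?P \<in> A_T n"
    unfolding A_T_def by blast
  moreover have "frob_inner n (shifted_skew_tt n s d) (\<lambda>i j. W i j - ?P i j) = 0" for s d
    using n by (simp add: frob_inner_shifted_skew_tt del: of_real_divide)
  ultimately show "?P \<in> A_T n \<and> (\<forall>A\<in>A_T n. frob_inner n A (\<lambda>i j. W i j - ?P i j) = 0)"
    by (auto simp: A_T_def)
next
  fix P assume P: "P \<in> A_T n \<and> (\<forall>A\<in>A_T n. frob_inner n A (\<lambda>i j. W i j - P i j) = 0)"
  then obtain s d where P_eq: "P = shifted_skew_tt n s d" by (auto simp: A_T_def)
  have orth: "frob_inner n (shifted_skew_tt n s' d') (\<lambda>i j. W i j - P i j) = 0" for s' d'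
    using P unfolding A_T_def by blast
  have "re_trace n W = real n * d" "re_skew_trace n W = 2 * real (n - 1) * s"
    using orth[of 0 1] orth[of 1 0] unfolding frob_inner_shifted_skew_tt by (simp_all add: P_eq)
  then show "P = ?P" using assms by (simp add: P_eq)
qed

lemma re_skew_trace_hermitian:
  assumes "\<And>i j. M j i = cnj (M i j)"
  shows "re_skew_trace n M = 0"
  unfolding re_skew_trace_def by (rule sum.neutral) (simp add: assms[of "Suc _"])

definition normalized_outer :: "nat \<Rightarrow> (nat \<Rightarrow> complex) \<Rightarrow> (nat \<Rightarrow> complex) \<Rightarrow> nat \<Rightarrow> nat \<Rightarrow> complex" where
  "normalized_outer n y x = (\<lambda>i j.
     if i \<in> {1..n} \<and> j \<in> {1..n} then vnormalize n y i * cnj (vnormalize n x j) else 0)"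

lemma normalized_outer_hermitian: "normalized_outer n x x j i = cnj (normalized_outer n x x i j)"
  by (auto simp: normalized_outer_def)

lemma vnorm2_squared: "(vnorm2 n x)\<^sup>2 = (\<Sum>k\<in>{1..n}. (cmod (x k))\<^sup>2)"
  by (simp add: vnorm2_def sum_nonneg)

lemma vnorm2_pos:
  assumes "k \<in> {1..n}" and "x k \<noteq> 0"
  shows "0 < vnorm2 n x"
proof -
  have "0 < (cmod (x k))\<^sup>2" using assms(2) by simp
  also have "\<dots> \<le> (\<Sum>k\<in>{1..n}. (cmod (x k))\<^sup>2)"
    using assms(1) by (intro member_le_sum) auto
  finally show ?thesis by (simp add: vnorm2_def)
qed

lemma vinner_self: "vinner n x x = of_real ((vnorm2 n x)\<^sup>2)"
proof -
  have "cnj z * z = of_real ((cmod z)\<^sup>2)" for z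
    by (metis complex_norm_square mult.commute)
  then show ?thesis
    by (simp add: vinner_def vnorm2_squared)
qed

lemma re_trace_normalized_outer:
  assumes "vnorm2 n x \<noteq> 0"
  shows "re_trace n (normalized_outer n x x) = 1"
proof -
  have "Re (vnormalize n x i * cnj (vnormalize n x i)) = (cmod (x i))\<^sup>2 / (vnorm2 n x)\<^sup>2" for i
    by (simp add: vnormalize_def norm_divide power_divide vnorm2_def sum_nonneg
        flip: complex_norm_square)
  then have "re_trace n (normalized_outer n x x) = (\<Sum>i\<in>{1..n}. (cmod (x i))\<^sup>2) / (vnorm2 n x)\<^sup>2"
    by (simp add: re_trace_def normalized_outer_def sum_divide_distrib)
  then show ?thesis
    using assms unfolding vnorm2_squared[symmetric] by simp
qed

lemma tt_lvec_eq_tt_rvec_skew: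
  "tt_lvec n (of_real \<sigma>) (- of_real \<sigma>) h = tt_rvec n (of_real \<sigma>) (- of_real \<sigma>) h"
  by (simp add: tt_lvec_def tt_rvec_def fun_eq_iff)

lemma tt_rvec_first_nonzero:
  assumes "\<sigma> \<noteq> 0" and "\<tau> \<noteq> 0" and "h \<in> {1..n}"
  shows "tt_rvec n \<sigma> \<tau> h 1 \<noteq> 0"
proof -
  have "real h * pi < real (n + 1) * pi"
    using assms(3) by (intro mult_strict_right_mono) auto
  then have "0 < real h * pi / real (n + 1)" and "real h * pi / real (n + 1) < pi"
    using assms(3) by (auto simp: field_simps)
  then have "sin (real h * pi / real (n + 1)) \<noteq> 0"
    using sin_gt_zero by fastforce
  then show ?thesis
    using assms(1,2) by (simp add: tt_rvec_def)
qed

theorem proposition15: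
  fixes n :: nat and \<sigma> \<delta> :: real
  assumes "n \<ge> 2" and "\<sigma> \<noteq> 0"
  shows "\<forall>h \<in> {1..n}. tt_kappa_AT n (of_real \<sigma>) (of_real \<delta>) (- of_real \<sigma>) h = 1 / sqrt (real n)"
proof
  fix h assume h: "h \<in> {1..n}"
  let ?x = "tt_rvec n (of_real \<sigma>) (- of_real \<sigma>) h"
  let ?W = "tt_W n (of_real \<sigma>) (- of_real \<sigma>) h"
  have "0 < vnorm2 n ?x"
    using assms h by (intro vnorm2_pos[of 1] tt_rvec_first_nonzero) auto
  then have kappa: "tt_kappa n (of_real \<sigma>) (of_real \<delta>) (- of_real \<sigma>) h = 1"
    by (simp add: tt_kappa_def tt_lvec_eq_tt_rvec_skew vinner_self norm_mult power2_eq_square)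
  have W: "?W = normalized_outer n ?x ?x"
    by (simp only: tt_W_def normalized_outer_def tt_lvec_eq_tt_rvec_skew)
  have "re_trace n ?W = 1"
    unfolding W using \<open>0 < vnorm2 n ?x\<close> by (simp add: re_trace_normalized_outer)
  moreover have "re_skew_trace n ?W = 0"
    unfolding W by (intro re_skew_trace_hermitian normalized_outer_hermitian)
  ultimately have proj: "proj_A_T n ?W = shifted_skew_tt n 0 (1 / real n)"
    by (simp add: proj_A_T_eq[OF assms(1)])
  have "sqrt (real n * (1 / real n)\<^sup>2) = 1 / sqrt (real n)"
    using assms(1) by (simp add: power2_eq_square real_sqrt_divide)
  then show "tt_kappa_AT n (of_real \<sigma>) (of_real \<delta>) (- of_real \<sigma>) h = 1 / sqrt (real n)"
    unfolding tt_kappa_AT_def kappa proj frob_norm_shifted_skew_tt by simp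
qed

end
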